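(* Let $c,R>0$ and let $\Omega\subset\mathbb H^n$ be an open convex set with $B_H(0,cR)\subset\Omega$. Let $u:\overline\Omega\to\mathbb R$ be an $H$-convex function with $u\le0$ in $\Omega$. Let $\xi_1,\xi_2\in B_H(0,cR)$ with $\xi_2\in H_{\xi_1}$, and let $c_1,c_2\ge0$, $c_3>0$ be constants such that $N(\xi_1)\le c_1R$, $N(\xi_2)\le c_2R$, $d_H(\xi_1,\xi_2)\le c_3R$, $c_1+c_3<c$ and $c_2+c_3<c$. Then $$\frac{c-c_1-c_3}{c-c_1}\,u(\xi_1)\ge u(\xi_2)\ge\frac{c-c_2}{c-c_2-c_3}\,u(\xi_1).$$
   Context: $\mathbb H^n=\mathbb C^n\times\mathbb R\cong\mathbb R^{2n+1}$ with real coordinates $(x,y,t)$, $z=x+iy$, group law $(z,t)\circ(z',t')=(z+z',t+t'+2\,\mathrm{Im}\langle z,z'\rangle)$, $\langle z,z'\rangle=\sum_j z_j\overline{z'_j}$. Dilations $\delta_\lambda(z,t)=(\lambda z,\lambda^2t)$. Horizontal plane at $\xi_0=(x_0,y_0,t_0)$: $H_{\xi_0}=\{(x,y,t):t=t_0+2(x\cdot y_0-x_0\cdot y)\}$. Gauge $N(z,t)=(|z|^4+t^2)^{1/4}$, $d_H(\xi,\zeta)=N(\zeta^{-1}\circ\xi)$, $B_H(\xi,r)=\{\zeta:d_H(\zeta,\xi)<r\}$. A function $u$ on an $H$-convex set $\tilde\Omega$ is $H$-convex if $u(\xi_1\circ\delta_\lambda(\xi_1^{-1}\circ\xi_2))\le(1-\lambda)u(\xi_1)+\lambda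 u(\xi_2)$ for all $\xi_1,\xi_2\in\tilde\Omega$ with $\xi_1\in H_{\xi_2}$, $\lambda\in[0,1]$. *)

theory Defs
  imports "HOL-Analysis.Analysis"
begin

text \<open>Points of H^n = C^n x R, written as (x, y, t) with z = x + i y, x, y in R^n.\<close>
type_synonym 'n hpoint = "(real^'n) \<times> (real^'n) \<times> real"

definition hmult :: "'n::finite hpoint \<Rightarrow> 'n hpoint \<Rightarrow> 'n hpoint" (infixl "\<circ>\<^sub>H" 70) where
  "hmult p q = (case p of (x, y, t) \<Rightarrow> case q of (x', y', t') \<Rightarrow>
     (x + x', y + y', t + t' + 2 * (y \<bullet> x' - x \<bullet> y')))"
  \<comment> \<open>2 Im<z,z'> = 2 (y.x' - x.y')\<close>

definition hinv :: "'n::finite hpoint \<Rightarrow> 'n hpoint" where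
  "hinv p = (case p of (x, y, t) \<Rightarrow> (- x, - y, - t))"

definition hdil :: "real \<Rightarrow> 'n::finite hpoint \<Rightarrow> 'n hpoint" where
  "hdil l p = (case p of (x, y, t) \<Rightarrow> (l *\<^sub>R x, l *\<^sub>R y, l\<^sup>2 * t))"

definition hplane :: "'n::finite hpoint \<Rightarrow> 'n hpoint set" where
  "hplane p0 = (case p0 of (x0, y0, t0) \<Rightarrow>
     {(x, y, t). t = t0 + 2 * (x \<bullet> y0 - x0 \<bullet> y)})"

definition gauge :: "'n::finite hpoint \<Rightarrow> real" where
  "gauge p = (case p of (x, y, t) \<Rightarrow>
     ((norm x ^ 2 + norm y ^ 2) ^ 2 + t ^ 2) powr (1/4))"

definition hdist :: "'n::finite hpoint \<Rightarrow> 'n hpoint \<Rightarrow> real" where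
  "hdist p q = gauge (hinv q \<circ>\<^sub>H p)"

definition hball :: "'n::finite hpoint \<Rightarrow> real \<Rightarrow> 'n hpoint set" where
  "hball p r = {q. hdist q p < r}"

definition hconvex_set :: "'n::finite hpoint set \<Rightarrow> bool" where
  "hconvex_set S \<longleftrightarrow> (\<forall>p1\<in>S. \<forall>p2\<in>S. p1 \<in> hplane p2 \<longrightarrow>
     (\<forall>l\<in>{0..1}. p1 \<circ>\<^sub>H hdil l (hinv p1 \<circ>\<^sub>H p2) \<in> S))"

definition hconvex_on :: "'n::finite hpoint set \<Rightarrow> ('n hpoint \<Rightarrow> real) \<Rightarrow> bool" where
  "hconvex_on S u \<longleftrightarrow> hconvex_set S \<and> (\<forall>p1\<in>S. \<forall>p2\<in>S. p1 \<in> hplane p2 \<longrightarrow>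
     (\<forall>l\<in>{0..1}. u (p1 \<circ>\<^sub>H hdil l (hinv p1 \<circ>\<^sub>H p2)) \<le> (1 - l) * u p1 + l * u p2))"

end

theory Submission
  imports Defs
begin

text \<open>
  Write \<open>p\<^sub>2 = p\<^sub>1 \<circ> h\<close> with \<open>h\<close> horizontal and extend the horizontal segment beyond
  \<open>p\<^sub>2\<close> to \<open>p\<^sub>3 = p\<^sub>1 \<circ> \<delta>\<^sub>\<lambda> h\<close>. Along horizontal directions the gauge is subadditive,
  \<open>N(p \<circ> h) \<le> N(p) + |h|\<close>, so \<open>p\<^sub>3\<close> stays in the ball \<open>B\<^sub>H(0, cR)\<close> for every
  \<open>\<lambda> < (c - c\<^sub>1)/c\<^sub>3\<close>. \<open>H\<close>-convexity on the segment \<open>[p\<^sub>1, p\<^sub>3]\<close> and \<open>u(p\<^sub>3) \<le> 0\<close> give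
  \<open>u(p\<^sub>2) \<le> (1 - 1/\<lambda>) u(p\<^sub>1)\<close>; letting \<open>\<lambda>\<close> tend to \<open>(c - c\<^sub>1)/c\<^sub>3\<close> yields the upper
  bound, and exchanging the roles of \<open>p\<^sub>1\<close> and \<open>p\<^sub>2\<close> the lower one.
\<close>

text \<open>The complex Cauchy--Schwarz inequality for \<open>z = x + iy\<close> and \<open>w = a + ib\<close>.\<close>

lemma inner_sum_squares_le:
  fixes x y a b :: "'a::real_inner"
  shows "(x \<bullet> a + y \<bullet> b)\<^sup>2 + (y \<bullet> a - x \<bullet> b)\<^sup>2 \<le> (x \<bullet> x + y \<bullet> y) * (a \<bullet> a + b \<bullet> b)"
proof -
  define P where "P = x \<bullet> a + y \<bullet> b"
  define Q where "Q = y \<bullet> a - x \<bullet> b"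
  define W where "W = a \<bullet> a + b \<bullet> b"
  define S where "S = x \<bullet> x + y \<bullet> y"
  have "0 \<le> (W *\<^sub>R x - P *\<^sub>R a + Q *\<^sub>R b) \<bullet> (W *\<^sub>R x - P *\<^sub>R a + Q *\<^sub>R b)
      + (W *\<^sub>R y - P *\<^sub>R b - Q *\<^sub>R a) \<bullet> (W *\<^sub>R y - P *\<^sub>R b - Q *\<^sub>R a)"
    by simp
  also have "\<dots> = W * (W * S - P\<^sup>2 - Q\<^sup>2)"
    unfolding P_def Q_def W_def S_def
    by (simp add: inner_add_left inner_add_right inner_diff_left inner_diff_right inner_commute
        power2_eq_square algebra_simps)
  finally have W_mult: "0 \<le> W * (W * S - P\<^sup>2 - Q\<^sup>2)" .
  show ?thesis
  proof (cases "W = 0")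
    case True
    then have "a \<bullet> a = 0" "b \<bullet> b = 0"
      unfolding W_def using inner_ge_zero [of a] inner_ge_zero [of b] by linarith+
    then have "a = 0" "b = 0" by simp_all
    then show ?thesis by simp
  next
    case False
    then have "W > 0"
      unfolding W_def using inner_ge_zero [of a] inner_ge_zero [of b] by linarith
    with W_mult have "0 \<le> W * S - P\<^sup>2 - Q\<^sup>2" by (simp add: zero_le_mult_iff)
    then show ?thesis unfolding P_def Q_def W_def S_def by (simp add: algebra_simps)
  qed
qed

lemma gauge_eq: "gauge (x, y, t) = sqrt (norm (norm (x, y) ^ 2, t))"
proof -
  have "X powr (1/4) = sqrt (sqrt X)" if "0 \<le> X" for X :: real
    using that by (simp add: powr_half_sqrt [symmetric] powr_powr)
  then show ?thesis by (simp add: gauge_def norm_Pair)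
qed

lemma gauge_hmult_horizontal_le: "gauge (p \<circ>\<^sub>H (a, b, 0)) \<le> gauge p + norm (a, b)"
proof -
  obtain x y t where p: "p = (x, y, t)" by (cases p) auto
  define P where "P = x \<bullet> a + y \<bullet> b"
  define Q where "Q = y \<bullet> a - x \<bullet> b"
  define S where "S = norm (x, y) ^ 2"
  define W where "W = norm (a, b) ^ 2"
  have PQ: "norm (P, Q) \<le> sqrt S * sqrt W"
    using inner_sum_squares_le [of x a y b]
    by (simp add: norm_Pair P_def Q_def S_def W_def power2_norm_eq_inner real_sqrt_mult [symmetric])
  have "sqrt S \<le> sqrt (norm (S, t))"
    by (simp add: S_def norm_Pair)
  then have "sqrt S * sqrt W \<le> sqrt (norm (S, t)) * norm (a, b)"
    by (simp add: W_def mult_right_mono)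
  with PQ have PQ': "norm (P, Q) \<le> sqrt (norm (S, t)) * norm (a, b)" by linarith
  have "norm ((x + a, y + b)) ^ 2 = S + W + 2 * P"
    unfolding S_def W_def P_def power2_norm_eq_inner
    by (simp add: inner_add_left inner_add_right inner_commute)
  then have "gauge (p \<circ>\<^sub>H (a, b, 0)) = sqrt (norm ((S, t) + (W, 0) + 2 *\<^sub>R (P, Q)))"
    by (simp add: p hmult_def gauge_eq Q_def algebra_simps)
  also have "\<dots> \<le> sqrt (norm (S, t) + norm (W, 0::real) + norm (2 *\<^sub>R (P, Q)))"
    by (intro real_sqrt_le_mono order_trans [OF norm_triangle_ineq] add_right_mono
        norm_triangle_ineq)
  also have "\<dots> = sqrt (norm (S, t) + W + 2 * norm (P, Q))"
    by (simp add: norm_Pair W_def del: scaleR_Pair)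
  also have "\<dots> \<le> sqrt ((sqrt (norm (S, t)) + norm (a, b))\<^sup>2)"
    using PQ' by (intro real_sqrt_le_mono) (simp add: W_def power2_sum)
  also have "\<dots> = gauge p + norm (a, b)"
    by (simp add: p gauge_eq S_def)
  finally show ?thesis .
qed

lemma hinv_hmult_cancel_left: "hinv p \<circ>\<^sub>H (p \<circ>\<^sub>H q) = q"
  by (cases p; cases q) (simp add: hinv_def hmult_def algebra_simps inner_commute)

lemma hdil_horizontal: "hdil l (a, b, 0) = (l *\<^sub>R a, l *\<^sub>R b, 0)"
  by (simp add: hdil_def)

lemma mem_hplane_iff: "p \<in> hplane q \<longleftrightarrow> (\<exists>a b. p = q \<circ>\<^sub>H (a, b, 0))"
proof (cases p; cases q)
  fix x y t x0 y0 t0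
  assume pq: "p = (x, y, t)" "q = (x0, y0, t0)"
  have "p \<in> hplane q \<longleftrightarrow> p = q \<circ>\<^sub>H (x - x0, y - y0, 0)"
    by (simp add: pq hplane_def hmult_def inner_diff_left inner_diff_right inner_commute
        algebra_simps)
  moreover have "p = q \<circ>\<^sub>H (a, b, 0) \<Longrightarrow> a = x - x0 \<and> b = y - y0" for a b
    by (simp add: pq hmult_def)
  ultimately show ?thesis by blast
qed

lemma hplane_sym: "p \<in> hplane q \<Longrightarrow> q \<in> hplane p"
  by (cases p; cases q) (auto simp: hplane_def algebra_simps inner_commute)

lemma hdist_sym: "hdist p q = hdist q p"
  by (cases p; cases q) (simp add: hdist_def hinv_def hmult_def gauge_def norm_minus_commute
      power2_commute algebra_simps inner_commute)

lemma hdist_hmult_horizontal: "hdist p (p \<circ>\<^sub>H (a, b, 0)) = norm (a, b)"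
  by (cases p) (simp add: hdist_def hinv_def hmult_def gauge_eq norm_Pair algebra_simps
      inner_commute)

lemma mem_hball_0_iff: "p \<in> hball 0 r \<longleftrightarrow> gauge p < r"
  by (cases p) (simp add: hball_def hdist_def hinv_def hmult_def zero_prod_def)

lemma hconvex_on_le_of_extension:
  assumes "hconvex_on S u" "p \<in> S" "q \<in> S" "p \<in> hplane q" "1 \<le> l" "u q \<le> 0"
  shows "u (p \<circ>\<^sub>H hdil (1 / l) (hinv p \<circ>\<^sub>H q)) \<le> (1 - 1 / l) * u p"
proof -
  have "1 / l \<in> {0..1}"
    using \<open>1 \<le> l\<close> by simp
  then have "u (p \<circ>\<^sub>H hdil (1 / l) (hinv p \<circ>\<^sub>H q)) \<le> (1 - 1 / l) * u p + 1 / l * u q"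
    using assms unfolding hconvex_on_def by blast
  moreover have "1 / l * u q \<le> 0"
    using assms by (simp add: divide_nonpos_pos)
  ultimately show ?thesis by linarith
qed

lemma hconvex_on_nonpos_le_scaled:
  fixes u :: "'n::finite hpoint \<Rightarrow> real"
  assumes conv: "hconvex_on S u" and ball: "hball 0 \<rho> \<subseteq> S"
    and nonpos: "\<forall>p\<in>hball 0 \<rho>. u p \<le> 0" and plane: "p2 \<in> hplane p1"
    and gauge_p1: "gauge p1 \<le> g" and hdist_le: "hdist p1 p2 \<le> \<delta>" "\<delta> > 0" and "g + \<delta> < \<rho>"
  shows "u p2 \<le> (\<rho> - g - \<delta>) / (\<rho> - g) * u p1"
proof -
  obtain a b where p2: "p2 = p1 \<circ>\<^sub>H (a, b, 0)"
    using plane mem_hplane_iff by blast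
  define L where "L = (\<rho> - g) / \<delta>"
  have "L > 1"
    using assms by (simp add: L_def field_simps)
  have norm_ab: "norm (a, b) \<le> \<delta>"
    using hdist_le p2 by (simp add: hdist_hmult_horizontal)
  have "gauge p1 < \<rho>"
    using assms by linarith
  then have p1_in: "p1 \<in> S"
    using ball mem_hball_0_iff by blast
  have bound: "u p2 \<le> (1 - 1 / l) * u p1" if l: "l \<in> {1<..<L}" for l
  proof -
    define p3 where "p3 = p1 \<circ>\<^sub>H (l *\<^sub>R a, l *\<^sub>R b, 0)"
    have "gauge p3 \<le> gauge p1 + l * norm (a, b)"
      using gauge_hmult_horizontal_le [of p1 "l *\<^sub>R a" "l *\<^sub>R b"] l
      by (simp add: p3_def scaleR_Pair [symmetric] del: scaleR_Pair)
    also have "l * norm (a, b) \<le> l * \<delta>"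
      using norm_ab l by simp
    also have "l * \<delta> < \<rho> - g"
      using l \<open>\<delta> > 0\<close> by (simp add: L_def field_simps)
    finally have "p3 \<in> hball 0 \<rho>"
      using gauge_p1 mem_hball_0_iff by fastforce
    moreover have "p1 \<in> hplane p3"
      using mem_hplane_iff hplane_sym p3_def by blast
    moreover have "p1 \<circ>\<^sub>H hdil (1 / l) (hinv p1 \<circ>\<^sub>H p3) = p2"
      using l by (simp add: p3_def p2 hinv_hmult_cancel_left hdil_horizontal)
    ultimately show ?thesis
      using hconvex_on_le_of_extension [OF conv p1_in, of p3 l] ball nonpos l by auto
  qed
  txt \<open>At \<open>l = L\<close> itself \<open>p\<^sub>3\<close> may lie on the boundary of the ball, where \<open>u \<le> 0\<close> is not
    assumed; hence the limit.\<close>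
  have "((\<lambda>l. (1 - 1 / l) * u p1) \<longlongrightarrow> (1 - 1 / L) * u p1) (at_left L)"
    using \<open>L > 1\<close> by (intro tendsto_intros) auto
  then have "u p2 \<le> (1 - 1 / L) * u p1"
  proof (rule tendsto_lowerbound)
    show "\<forall>\<^sub>F l in at_left L. u p2 \<le> (1 - 1 / l) * u p1"
      using eventually_at_left_real [OF \<open>L > 1\<close>] by (rule eventually_mono) (rule bound)
  qed simp
  also have "1 - 1 / L = (\<rho> - g - \<delta>) / (\<rho> - g)"
    using assms by (simp add: L_def field_simps)
  finally show ?thesis .
qed

theorem lemma6p6:
  fixes \<Omega> :: "'n::finite hpoint set" and u :: "'n hpoint \<Rightarrow> real"
    and c R c1 c2 c3 :: real and p1 p2 :: "'n hpoint"
  assumes "c > 0" "R > 0"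
    and "open \<Omega>" "convex \<Omega>" "hball 0 (c * R) \<subseteq> \<Omega>"
    and "hconvex_on (closure \<Omega>) u"
    and "\<forall>p\<in>\<Omega>. u p \<le> 0"
    and "p1 \<in> hball 0 (c * R)" "p2 \<in> hball 0 (c * R)" "p2 \<in> hplane p1"
    and "c1 \<ge> 0" "c2 \<ge> 0" "c3 > 0"
    and "gauge p1 \<le> c1 * R" "gauge p2 \<le> c2 * R" "hdist p1 p2 \<le> c3 * R"
    and "c1 + c3 < c" "c2 + c3 < c"
  shows "(c - c1 - c3) / (c - c1) * u p1 \<ge> u p2
       \<and> u p2 \<ge> (c - c2) / (c - c2 - c3) * u p1"
proof -
  have ball: "hball 0 (c * R) \<subseteq> closure \<Omega>"
    using assms(5) closure_subset by blast
  have nonpos: "\<forall>p\<in>hball 0 (c * R). u p \<le> 0"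
    using assms(5,7) by blast
  have rescale: "(c * R - a * R - c3 * R) / (c * R - a * R) = (c - a - c3) / (c - a)" for a
    using \<open>R > 0\<close> by (simp add: left_diff_distrib [symmetric])
  have rescale_lt: "a * R + c3 * R < c * R" if "a + c3 < c" for a
    using that \<open>R > 0\<close> by (simp add: distrib_right [symmetric])
  have upper: "u p2 \<le> (c - c1 - c3) / (c - c1) * u p1"
    using hconvex_on_nonpos_le_scaled [OF assms(6) ball nonpos assms(10), of "c1 * R" "c3 * R"]
      assms rescale rescale_lt by simp
  have "u p1 \<le> (c - c2 - c3) / (c - c2) * u p2"
    using hconvex_on_nonpos_le_scaled [OF assms(6) ball nonpos hplane_sym [OF assms(10)],
        of "c2 * R" "c3 * R"] assms rescale rescale_lt hdist_sym [of p1 p2] by simp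
  moreover have "(c - c2 - c3) / (c - c2) > 0"
    using assms by simp
  ultimately have "u p1 / ((c - c2 - c3) / (c - c2)) \<le> u p2"
    by (simp only: pos_divide_le_eq mult.commute)
  with upper show ?thesis by (simp add: mult.commute)
qed

end
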